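(* Let $\phi\in\mathrm{Homeo}(\overline{\mathbb D}^2,\partial\overline{\mathbb D}^2)$ preserve the coherent probability measures $\lambda_1,\dots,\lambda_n$ on $\overline{\mathbb D}^2$. Then the map $(\overline{\mathbb D}^2)^n\to\mathcal F_n$, $P_n\mapsto\beta(P_n;\phi)$ (defined on the set where $\beta(P_n;\phi)$ is defined), is measurable with respect to the product measure $\lambda_1\times\cdots\times\lambda_n$.
   Context: $\overline{\mathbb D}^2$ is the closed unit disk in $\mathbb R^2$, $\mathbb D^2$ its interior. Fix $n\ge1$ and distinct points $q_1,\dots,q_n\in\mathbb D^2$ equally spaced, in this order, on a diameter. The Artin braid group $B_n$ has generators $\sigma_1,\dots,\sigma_{n-1}$ with relations $\sigma_i\sigma_j=\sigma_j\sigma_i$ ($|i-j|\ge2$) and $\sigma_i\sigma_{i+1}\sigma_i=\sigma_{i+1}\sigma_i\sigma_{i+1}$; geometrically, $B_n$ is the set of equivalence classes (under continuous deformation through such objects) of geometrical braids, i.e. unions of $n$ arcs $\{(\gamma_i(t),t):t\in[0,1]\}\subset\mathbb D^2\times[0,1]$ with $\gamma_i(t)\ne\gamma_j(t)$ for $i\ne j$, joining $\{q_1,\dots,q_n\}\times\{0\}$ to $\{q_1,\dots,q_n\}\times\{1\}$, with product given by concatenation (the first factor below the second). The pure braid group $\mathcal F_n$ consists of classes with $\gamma_i(0)=\gamma_i(1)$ for all $i$. $\mathrm{Homeo}(\overline{\mathbb D}^2,\partial\overline{\mathbb D}^2)$ is the group of homeomorphisms of $\overline{\mathbb D}^2$ equal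 to the identity near the boundary. $\Omega^{2n}$ is the set of $(p_1,\dots,p_n)\in(\overline{\mathbb D}^2)^n$ such that for all $i\ne j$ and all $s\in[0,1]$, $(1-s)q_i+sp_i\ne(1-s)q_j+sp_j$. For $\phi\in\mathrm{Homeo}(\overline{\mathbb D}^2,\partial\overline{\mathbb D}^2)$ and $P_n=(p_1,\dots,p_n)$ with pairwise distinct $p_i\in\mathbb D^2$ such that both $P_n$ and $(\phi(p_1),\dots,\phi(p_n))$ lie in $\Omega^{2n}$, the braid $\beta(P_n;\phi)\in\mathcal F_n$ is defined ("$\beta(P_n;\phi)$ is defined") as the class of the geometrical braid whose $i$-th strand is: the segment from $(q_i,0)$ to $(p_i,1/3)$, then the arc $(\phi_{3t-1}(p_i),t)$, $t\in[1/3,2/3]$, where $(\phi_\tau)_{\tau\in[0,1]}$ is any isotopy in $\mathrm{Homeo}(\overline{\mathbb D}^2,\partial\overline{\mathbb D}^2)$ from the identity to $\phi$, then the segment from $(\phi(p_i),2/3)$ to $(q_i,1)$; this class does not depend on the isotopy. An $n$-tuple $\lambda_1,\dots,\lambda_n$ of probability measures on $\overline{\mathbb D}^2$ is coherent if $\Omega^{2n}$ has full measure for $\lambda_1\times\cdots\times\lambda_n$. *)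

theory Defs
  imports "HOL-Probability.Probability"
begin

text \<open>The closed unit disk is cball 0 1 in the complex plane (identified with R^2),
  its interior is ball 0 1. An n-tuple of points is a function nat => complex; only the
  indices i < n are relevant.\<close>

text \<open>The base points q_1..q_n (here indexed 0..n-1): equally spaced, in order,
  on the real diameter.\<close>
definition qpt :: "nat \<Rightarrow> nat \<Rightarrow> complex" where
  "qpt n i = complex_of_real ((2 * real i + 2 - (real n + 1)) / (real n + 1))"

definition base_conf :: "nat \<Rightarrow> (nat \<Rightarrow> complex)" where
  "base_conf n = (\<lambda>i. if i < n then qpt n i else 0)"

definition conf :: "nat \<Rightarrow> (nat \<Rightarrow> complex) set" where
  "conf n = {x. (\<forall>i<n. x i \<in> ball 0 1) \<and> (\<forall>i<n. \<forall>j<n. i \<noteq> j \<longrightarrow> x i \<noteq> x j)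
                \<and> (\<forall>i. n \<le> i \<longrightarrow> x i = 0)}"

definition braid_class :: "nat \<Rightarrow> (real \<Rightarrow> (nat \<Rightarrow> complex)) \<Rightarrow> (real \<Rightarrow> (nat \<Rightarrow> complex)) set" where
  "braid_class n g = {h. homotopic_paths (conf n) g h}"

text \<open>The pure braid group F_n (as a set of classes of pure geometric braids).\<close>
definition pure_braids :: "nat \<Rightarrow> (real \<Rightarrow> (nat \<Rightarrow> complex)) set set" where
  "pure_braids n = {b. \<exists>g. b = braid_class n g \<and> path g \<and> path_image g \<subseteq> conf n
       \<and> pathstart g = base_conf n \<and> pathfinish g = base_conf n}"

definition homeo_bd :: "(complex \<Rightarrow> complex) \<Rightarrow> bool" where
  "homeo_bd \<phi> \<longleftrightarrow> (\<exists>\<psi>. homeomorphism (cball 0 1) (cball 0 1) \<phi> \<psi>)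
      \<and> (\<exists>e>0. \<forall>x\<in>cball 0 1. 1 - e < norm x \<longrightarrow> \<phi> x = x)"

definition isotopy :: "(real \<Rightarrow> complex \<Rightarrow> complex) \<Rightarrow> (complex \<Rightarrow> complex) \<Rightarrow> bool" where
  "isotopy H \<phi> \<longleftrightarrow> continuous_on ({0..1} \<times> cball 0 1) (\<lambda>(t, x). H t x)
      \<and> (\<forall>t\<in>{0..1}. homeo_bd (H t))
      \<and> (\<forall>x\<in>cball 0 1. H 0 x = x \<and> H 1 x = \<phi> x)"

definition Omega :: "nat \<Rightarrow> (nat \<Rightarrow> complex) set" where
  "Omega n = {p. (\<forall>i<n. p i \<in> cball 0 1) \<and>
      (\<forall>i<n. \<forall>j<n. i \<noteq> j \<longrightarrow> (\<forall>s\<in>{0..1::real}.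
          (1 - s) *\<^sub>R qpt n i + s *\<^sub>R p i \<noteq> (1 - s) *\<^sub>R qpt n j + s *\<^sub>R p j))}"

definition braid_path :: "nat \<Rightarrow> (complex \<Rightarrow> complex) \<Rightarrow> (real \<Rightarrow> complex \<Rightarrow> complex)
    \<Rightarrow> (nat \<Rightarrow> complex) \<Rightarrow> real \<Rightarrow> (nat \<Rightarrow> complex)" where
  "braid_path n \<phi> H P t = (\<lambda>i. if i < n then
       (if t \<le> 1/3 then (1 - 3*t) *\<^sub>R qpt n i + (3*t) *\<^sub>R P i
        else if t \<le> 2/3 then H (3*t - 1) (P i)
        else (3 - 3*t) *\<^sub>R \<phi> (P i) + (3*t - 2) *\<^sub>R qpt n i)
     else 0)"

definition beta_defined :: "nat \<Rightarrow> (complex \<Rightarrow> complex) \<Rightarrow> (nat \<Rightarrow> complex) \<Rightarrow> bool" where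
  "beta_defined n \<phi> P \<longleftrightarrow> (\<forall>i<n. P i \<in> ball 0 1) \<and> (\<forall>i<n. \<forall>j<n. i \<noteq> j \<longrightarrow> P i \<noteq> P j)
      \<and> P \<in> Omega n \<and> (\<lambda>i. \<phi> (P i)) \<in> Omega n"

text \<open>beta(P; phi): the class of the geometric braid for any isotopy (independent of it).\<close>
definition beta :: "nat \<Rightarrow> (complex \<Rightarrow> complex) \<Rightarrow> (nat \<Rightarrow> complex) \<Rightarrow> (real \<Rightarrow> (nat \<Rightarrow> complex)) set" where
  "beta n \<phi> P = (SOME b. \<exists>H. isotopy H \<phi> \<and> b = braid_class n (braid_path n \<phi> H P))"

definition coherent :: "nat \<Rightarrow> (nat \<Rightarrow> complex measure) \<Rightarrow> bool" where
  "coherent n \<mu> \<longleftrightarrow> (let M = PiM {..<n} \<mu> in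
      {P \<in> space M. P \<in> Omega n} \<in> sets M \<and> emeasure M {P \<in> space M. P \<in> Omega n} = 1)"

definition preserves :: "(complex \<Rightarrow> complex) \<Rightarrow> complex measure \<Rightarrow> bool" where
  "preserves \<phi> M \<longleftrightarrow> \<phi> \<in> measurable M M \<and> distr M M \<phi> = M"

end

theory Submission
  imports Defs
begin

text \<open>The map \<open>P \<mapsto> \<beta>(P; \<phi>)\<close> is locally constant on the set where it is defined, and
  this set is open: the defining conditions (points in the open disk, pairwise distinct, straight
  segments to the base points pairwise disjoint, before and after applying \<open>\<phi>\<close>) are open, and
  moving \<open>P\<close> along a straight segment inside this set gives homotopic geometric braids.
  A locally constant map on an open subset of a product of disks is measurable for any measures
  with the Borel sets.

  That \<open>\<beta>\<close> does not depend on the isotopy is shown with the Alexander trick: every isotopy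
  \<open>H\<close> from the identity to \<open>\<phi>\<close> is homotopic through such isotopies to one that runs
  \<open>H\<close> at scale \<open>0\<close>, where it is invisible, and then expands \<open>\<phi>\<close>.\<close>

lemma homeo_bd_continuous: "homeo_bd g \<Longrightarrow> continuous_on (cball 0 1) g"
  unfolding homeo_bd_def using homeomorphism_cont1 by blast

lemma homeo_bd_maps_cball: "homeo_bd g \<Longrightarrow> x \<in> cball 0 1 \<Longrightarrow> g x \<in> cball 0 1"
  unfolding homeo_bd_def using homeomorphism_image1 by blast

lemma homeo_bd_inj: "homeo_bd g \<Longrightarrow> inj_on g (cball 0 1)"
  unfolding homeo_bd_def by (metis homeomorphism_apply1 inj_on_inverseI)

lemma homeo_bd_fixes_sphere: "homeo_bd g \<Longrightarrow> norm x = 1 \<Longrightarrow> g x = x"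
  unfolding homeo_bd_def by force

lemma homeo_bd_maps_ball:
  assumes g: "homeo_bd g" and x: "x \<in> ball 0 1"
  shows "g x \<in> ball 0 1"
proof (rule ccontr)
  assume "g x \<notin> ball 0 1"
  then have sphere: "norm (g x) = 1" using homeo_bd_maps_cball[OF g, of x] x by auto
  then have "g (g x) = g x" using homeo_bd_fixes_sphere[OF g] by blast
  then have "g x = x" using homeo_bd_inj[OF g] homeo_bd_maps_cball[OF g, of x] x by (auto dest: inj_onD)
  then show False using sphere x by auto
qed

lemma homeo_bd_inverse:
  assumes g: "homeo_bd g"
  obtains h where "homeomorphism (cball 0 1) (cball 0 1) g h" and "homeo_bd h"
proof -
  obtain h where h: "homeomorphism (cball 0 1) (cball 0 1) g h" using g homeo_bd_def by blast
  obtain e where e: "e > 0" "\<forall>x\<in>cball 0 1. 1 - e < norm x \<longrightarrow> g x = x" using g homeo_bd_def by blast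
  have "\<forall>x\<in>cball 0 1. 1 - e < norm x \<longrightarrow> h x = x"
    using e(2) homeomorphism_apply1[OF h] by metis
  then have "homeo_bd h" unfolding homeo_bd_def using e(1) homeomorphism_symD[OF h] by blast
  then show thesis using h that by blast
qed

section \<open>The Alexander trick\<close>

text \<open>The division by \<open>u = 0\<close> is harmless: the first branch then only
  applies at \<open>x = 0\<close>, where it returns \<open>0\<close>.\<close>
definition alexander :: "real \<Rightarrow> ('a::real_normed_vector \<Rightarrow> 'a) \<Rightarrow> 'a \<Rightarrow> 'a" where
  "alexander u g x = (if norm x \<le> u then u *\<^sub>R g ((1 / u) *\<^sub>R x) else x)"

lemma alexander_0 [simp]: "alexander 0 g x = x"
  by (simp add: alexander_def)

lemma alexander_1: "x \<in> cball 0 1 \<Longrightarrow> alexander 1 g x = g x"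
  by (simp add: alexander_def)

lemma alexander_cong:
  assumes x: "x \<in> cball 0 1" and eq: "\<And>y. y \<in> cball 0 1 \<Longrightarrow> g y = g' y" and u: "0 \<le> u"
  shows "alexander u g x = alexander u g' x"
proof (cases "norm x \<le> u \<and> u > 0")
  case True
  then have "(1 / u) *\<^sub>R x \<in> cball 0 1" by (auto simp: field_simps)
  then show ?thesis using True eq by (simp add: alexander_def)
next
  case False
  then show ?thesis using u by (auto simp: alexander_def)
qed

lemma alexander_id_on_cball:
  assumes "x \<in> cball 0 1" and "\<And>y. y \<in> cball 0 1 \<Longrightarrow> g y = y" and "0 \<le> u"
  shows "alexander u g x = x"
proof -
  have "alexander u g x = alexander u id x" by (rule alexander_cong) (use assms in auto)
  also have "\<dots> = x" by (cases "u = 0") (auto simp: alexander_def)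
  finally show ?thesis .
qed

lemma norm_alexander_le:
  assumes g: "\<And>y. y \<in> cball 0 1 \<Longrightarrow> g y \<in> cball 0 1" and u: "0 \<le> u" and x: "norm x \<le> u"
  shows "norm (alexander u g x) \<le> u"
proof (cases "u = 0")
  case False
  then have "(1 / u) *\<^sub>R x \<in> cball 0 1" using u x by (auto simp: field_simps)
  then have "u * norm (g ((1 / u) *\<^sub>R x)) \<le> u * 1" using g u by (intro mult_left_mono) auto
  then show ?thesis using x u by (simp add: alexander_def)
qed (use x in \<open>simp add: alexander_def\<close>)

lemma alexander_maps_cball:
  assumes "\<And>y. y \<in> cball 0 1 \<Longrightarrow> g y \<in> cball 0 1" and "u \<in> {0..1}" and "x \<in> cball 0 1"
  shows "alexander u g x \<in> cball 0 1"
  using norm_alexander_le[of g u x] assms by (cases "norm x \<le> u") (auto simp: alexander_def)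

lemma alexander_inverse:
  assumes g: "\<And>y. y \<in> cball 0 1 \<Longrightarrow> g y \<in> cball 0 1" and hg: "\<And>y. y \<in> cball 0 1 \<Longrightarrow> h (g y) = y"
    and u: "0 \<le> u" and x: "x \<in> cball 0 1"
  shows "alexander u h (alexander u g x) = x"
proof (cases "norm x \<le> u \<and> u \<noteq> 0")
  case True
  then have y: "(1 / u) *\<^sub>R x \<in> cball 0 1" using u by (auto simp: field_simps)
  have "norm (alexander u g x) \<le> u" using norm_alexander_le[of g u x] g u True by blast
  then have "alexander u h (alexander u g x) = u *\<^sub>R h (g ((1 / u) *\<^sub>R x))"
    using True by (simp add: alexander_def)
  then show ?thesis using hg[OF y] True by simp
qed (auto simp: alexander_def)

text \<open>At \<open>u = 0\<close> the rescaled map is squeezed into the disk of radius \<open>u\<close>: this is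
  where the continuity of the Alexander trick comes from.\<close>
lemma continuous_on_alexander_inner:
  fixes G :: "'b::topological_space \<Rightarrow> 'a::real_normed_vector \<Rightarrow> 'a"
  assumes G: "continuous_on (T \<times> cball 0 1) (\<lambda>(t, x). G t x)"
    and G_cball: "\<And>t x. t \<in> T \<Longrightarrow> x \<in> cball 0 1 \<Longrightarrow> G t x \<in> cball 0 1"
  defines "Z \<equiv> {w \<in> ({0..1} \<times> T) \<times> cball 0 1. norm (snd w) \<le> fst (fst w)}"
  shows "continuous_on Z (\<lambda>((u, t), x). u *\<^sub>R G t ((1 / u) *\<^sub>R x))"
  unfolding continuous_on_def
proof
  fix w assume w: "w \<in> Z"
  obtain u t x where w_eq: "w = ((u, t), x)" by (metis prod.collapse)
  let ?f = "\<lambda>((u, t), x). u *\<^sub>R G t ((1 / u) *\<^sub>R x)"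
  show "(?f \<longlongrightarrow> ?f w) (at w within Z)"
  proof (cases "u = 0")
    case True
    have bound: "norm (?f w') \<le> fst (fst w')" if "w' \<in> Z" for w'
      using that norm_alexander_le[of "G (snd (fst w'))" "fst (fst w')" "snd w'"] G_cball
      by (auto simp: Z_def alexander_def case_prod_beta)
    have "((\<lambda>w'. fst (fst w')) \<longlongrightarrow> 0) (at w within Z)"
      using tendsto_fst[OF tendsto_fst[OF tendsto_ident_at[of w Z]]] True w_eq by simp
    then have "(?f \<longlongrightarrow> 0) (at w within Z)"
      by (rule Lim_null_comparison[rotated]) (use bound in \<open>auto simp: eventually_at_filter\<close>)
    then show ?thesis using True w_eq by simp
  next
    case False
    let ?U = "{w. fst (fst w) > (0::real)}"
    have "open ?U" by (rule open_Collect_less) (intro continuous_intros)+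
    then have at_eq: "at w within Z = at w within (Z \<inter> ?U)"
      by (rule at_within_nhd[rotated]) (use False w w_eq in \<open>auto simp: Z_def\<close>)
    have "(\<lambda>w. (snd (fst w), (1 / fst (fst w)) *\<^sub>R snd w)) ` (Z \<inter> ?U) \<subseteq> T \<times> cball 0 1"
      by (auto simp: Z_def field_simps)
    then have "continuous_on (Z \<inter> ?U) (\<lambda>w. (\<lambda>(t, x). G t x) (snd (fst w), (1 / fst (fst w)) *\<^sub>R snd w))"
      by (intro continuous_on_compose2[OF G] continuous_intros) auto
    then have "continuous_on (Z \<inter> ?U) ?f"
      by (auto simp: case_prod_beta intro!: continuous_intros)
    moreover have "w \<in> Z \<inter> ?U" using False w w_eq by (auto simp: Z_def)
    ultimately have "(?f \<longlongrightarrow> ?f w) (at w within (Z \<inter> ?U))"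
      unfolding continuous_on_def by blast
    then show ?thesis using at_eq by simp
  qed
qed

lemma continuous_on_alexander_family:
  fixes G :: "'b::topological_space \<Rightarrow> 'a::real_normed_vector \<Rightarrow> 'a"
  assumes G: "continuous_on (T \<times> cball 0 1) (\<lambda>(t, x). G t x)"
    and G_cball: "\<And>t x. t \<in> T \<Longrightarrow> x \<in> cball 0 1 \<Longrightarrow> G t x \<in> cball 0 1"
    and G_sphere: "\<And>t x. t \<in> T \<Longrightarrow> norm x = 1 \<Longrightarrow> G t x = x"
  shows "continuous_on (({0..1} \<times> T) \<times> cball 0 1) (\<lambda>((u, t), x). alexander u (G t) x)"
proof -
  let ?Z = "({0..1::real} \<times> T) \<times> cball (0::'a) 1"
  let ?f = "\<lambda>w. fst (fst w) *\<^sub>R G (snd (fst w)) ((1 / fst (fst w)) *\<^sub>R snd w)"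
  have "continuous_on ?Z (\<lambda>w. if norm (snd w) - fst (fst w) \<le> 0 then ?f w else snd w)"
  proof (rule continuous_on_cases_le)
    show "continuous_on {w \<in> ?Z. norm (snd w) - fst (fst w) \<le> 0} ?f"
      using continuous_on_alexander_inner[OF G G_cball] by (simp add: case_prod_beta)
    fix w assume w: "w \<in> ?Z" "norm (snd w) - fst (fst w) = 0"
    show "?f w = snd w"
    proof (cases "fst (fst w) = 0")
      case False
      then have "norm ((1 / fst (fst w)) *\<^sub>R snd w) = 1" using w by auto
      then show ?thesis using G_sphere w False by auto
    qed (use w in auto)
  qed (intro continuous_intros)+
  then show ?thesis by (simp add: alexander_def case_prod_beta)
qed

lemma continuous_on_alexander:
  assumes "continuous_on (cball 0 1) g" and "\<And>x. x \<in> cball 0 1 \<Longrightarrow> g x \<in> cball 0 1"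
    and "\<And>x. norm x = 1 \<Longrightarrow> g x = x"
  shows "continuous_on ({0..1} \<times> cball 0 1) (\<lambda>(u, x). alexander u g x)"
proof -
  have "continuous_on ({0::real} \<times> cball 0 1) (\<lambda>w. g (snd w))"
    by (rule continuous_on_compose2[OF assms(1) continuous_on_snd]) auto
  then have "continuous_on ({0::real} \<times> cball 0 1) (\<lambda>(t, x). g x)"
    by (simp add: case_prod_beta)
  then have "continuous_on (({0..1} \<times> {0::real}) \<times> cball 0 1) (\<lambda>((u, t), x). alexander u g x)"
    using continuous_on_alexander_family[of "{0::real}" "\<lambda>t. g"] assms by auto
  then have "continuous_on ({0..1} \<times> cball 0 1) (\<lambda>w. (\<lambda>((u, t), x). alexander u g x) ((fst w, 0::real), snd w))"
    by (rule continuous_on_compose2) (auto intro!: continuous_intros)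
  then show ?thesis by (simp add: case_prod_beta)
qed

lemma homeo_bd_alexander:
  assumes g: "homeo_bd g" and u: "u \<in> {0..1}"
  shows "homeo_bd (alexander u g)"
proof -
  obtain h where gh: "homeomorphism (cball 0 1) (cball 0 1) g h" and h: "homeo_bd h"
    using homeo_bd_inverse[OF g] .
  have cont: "continuous_on (cball 0 1) (alexander u f)" if f: "homeo_bd f" for f
  proof -
    have "continuous_on (cball 0 1) (\<lambda>x. (\<lambda>(u, x). alexander u f x) (u, x))"
      by (rule continuous_on_compose2[OF continuous_on_alexander])
        (use f u homeo_bd_continuous homeo_bd_maps_cball homeo_bd_fixes_sphere
          in \<open>auto intro!: continuous_intros\<close>)
    then show ?thesis by simp
  qed
  have "homeomorphism (cball 0 1) (cball 0 1) (alexander u g) (alexander u h)"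
  proof
    show "alexander u h (alexander u g x) = x" if "x \<in> cball 0 1" for x
      using alexander_inverse[of g h u x] homeo_bd_maps_cball[OF g] homeomorphism_apply1[OF gh] u that
      by auto
    show "alexander u g (alexander u h x) = x" if "x \<in> cball 0 1" for x
      using alexander_inverse[of h g u x] homeo_bd_maps_cball[OF h] homeomorphism_apply2[OF gh] u that
      by auto
    show "alexander u g ` cball 0 1 \<subseteq> cball 0 1"
      using alexander_maps_cball[of g u, OF homeo_bd_maps_cball[OF g] u] by blast
    show "alexander u h ` cball 0 1 \<subseteq> cball 0 1"
      using alexander_maps_cball[of h u, OF homeo_bd_maps_cball[OF h] u] by blast
  qed (use cont[OF g] cont[OF h] in auto)
  moreover have "\<exists>e>0. \<forall>x\<in>cball 0 1. 1 - e < norm x \<longrightarrow> alexander u g x = x"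
  proof (cases "u < 1")
    case True
    then show ?thesis by (intro exI[of _ "1 - u"]) (auto simp: alexander_def)
  next
    case False
    then have "u = 1" using u by simp
    then show ?thesis using g alexander_1 unfolding homeo_bd_def by (metis mem_cball_0)
  qed
  ultimately show ?thesis unfolding homeo_bd_def by blast
qed

lemma isotopy_alexander:
  assumes "homeo_bd \<phi>"
  shows "isotopy (\<lambda>u. alexander u \<phi>) \<phi>"
  unfolding isotopy_def
  using continuous_on_alexander[of \<phi>] homeo_bd_continuous homeo_bd_maps_cball homeo_bd_fixes_sphere
    homeo_bd_alexander alexander_1 assms
  by auto

lemma isotopy_continuous: "isotopy H \<phi> \<Longrightarrow> continuous_on ({0..1} \<times> cball 0 1) (\<lambda>(t, x). H t x)"
  by (simp add: isotopy_def)

lemma isotopy_homeo_bd: "isotopy H \<phi> \<Longrightarrow> t \<in> {0..1} \<Longrightarrow> homeo_bd (H t)"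
  by (simp add: isotopy_def)

lemma isotopy_start: "isotopy H \<phi> \<Longrightarrow> x \<in> cball 0 1 \<Longrightarrow> H 0 x = x"
  by (simp add: isotopy_def)

lemma isotopy_finish: "isotopy H \<phi> \<Longrightarrow> x \<in> cball 0 1 \<Longrightarrow> H 1 x = \<phi> x"
  by (simp add: isotopy_def)

lemma qpt_in_ball: "i < n \<Longrightarrow> qpt n i \<in> ball 0 1"
proof -
  assume "i < n"
  then have "\<bar>(2 * real i + 2 - (real n + 1)) / (real n + 1)\<bar> < 1"
    by (auto simp: abs_less_iff field_simps)
  then show ?thesis by (simp only: qpt_def norm_of_real mem_ball_0)
qed

lemma pathstart_braid_path [simp]: "pathstart (braid_path n \<phi> H P) = base_conf n"
  by (auto simp: pathstart_def braid_path_def base_conf_def)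

lemma pathfinish_braid_path [simp]: "pathfinish (braid_path n \<phi> H P) = base_conf n"
  by (auto simp: pathfinish_def braid_path_def base_conf_def)

lemma braid_path_cong:
  assumes "\<And>\<tau> x. \<tau> \<in> {0..1} \<Longrightarrow> x \<in> cball 0 1 \<Longrightarrow> H \<tau> x = H' \<tau> x"
    and "\<And>i. i < n \<Longrightarrow> P i \<in> cball 0 1"
  shows "braid_path n \<phi> H P = braid_path n \<phi> H' P"
  using assms by (auto simp: braid_path_def fun_eq_iff)

lemma beta_defined_in_ball: "beta_defined n \<phi> P \<Longrightarrow> i < n \<Longrightarrow> P i \<in> ball 0 1"
  by (simp add: beta_defined_def)

lemma segment_from_qpt_in_ball:
  "i < n \<Longrightarrow> x \<in> ball 0 1 \<Longrightarrow> s \<in> {0..1} \<Longrightarrow> (1 - s) *\<^sub>R qpt n i + s *\<^sub>R x \<in> ball 0 1"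
  by (rule convexD[OF convex_ball qpt_in_ball]) auto

lemma Omega_segments_distinct:
  "Q \<in> Omega n \<Longrightarrow> i < n \<Longrightarrow> j < n \<Longrightarrow> i \<noteq> j \<Longrightarrow> s \<in> {0..1} \<Longrightarrow>
    (1 - s) *\<^sub>R qpt n i + s *\<^sub>R Q i \<noteq> (1 - s) *\<^sub>R qpt n j + s *\<^sub>R Q j"
  by (simp add: Omega_def)

lemma braid_path_last_third:
  fixes y q :: "'a::real_vector"
  shows "(3 - 3 * t) *\<^sub>R y + (3 * t - 2) *\<^sub>R q = (1 - (3 - 3 * t)) *\<^sub>R q + (3 - 3 * t) *\<^sub>R y"
  by (simp add: add.commute)

lemma braid_path_in_ball:
  assumes \<phi>: "homeo_bd \<phi>" and H: "isotopy H \<phi>" and P: "beta_defined n \<phi> P"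
    and t: "t \<in> {0..1}" and i: "i < n"
  shows "braid_path n \<phi> H P t i \<in> ball 0 1"
proof -
  have Pi: "P i \<in> ball 0 1" using beta_defined_in_ball[OF P i] .
  consider "t \<le> 1/3" | "1/3 < t" "t \<le> 2/3" | "2/3 < t" by linarith
  then show ?thesis
  proof cases
    case 1
    then show ?thesis using segment_from_qpt_in_ball[OF i Pi, of "3 * t"] t i by (simp add: braid_path_def)
  next
    case 2
    then show ?thesis
      using homeo_bd_maps_ball[OF isotopy_homeo_bd[OF H] Pi, of "3 * t - 1"] i by (simp add: braid_path_def)
  next
    case 3
    then show ?thesis
      using segment_from_qpt_in_ball[OF i homeo_bd_maps_ball[OF \<phi> Pi], of "3 - 3 * t"] t i
      by (simp add: braid_path_def braid_path_last_third)
  qed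
qed

lemma braid_path_distinct:
  assumes \<phi>: "homeo_bd \<phi>" and H: "isotopy H \<phi>" and P: "beta_defined n \<phi> P"
    and t: "t \<in> {0..1}" and ij: "i < n" "j < n" "i \<noteq> j"
  shows "braid_path n \<phi> H P t i \<noteq> braid_path n \<phi> H P t j"
proof -
  have Omega: "P \<in> Omega n" "(\<lambda>i. \<phi> (P i)) \<in> Omega n" using P by (simp_all add: beta_defined_def)
  consider "t \<le> 1/3" | "1/3 < t" "t \<le> 2/3" | "2/3 < t" by linarith
  then show ?thesis
  proof cases
    case 1
    then show ?thesis using Omega_segments_distinct[OF Omega(1) ij, of "3 * t"] t ij by (simp add: braid_path_def)
  next
    case 2
    have "P i \<noteq> P j" "P i \<in> cball 0 1" "P j \<in> cball 0 1" using P ij by (auto simp: beta_defined_def)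
    then have "H (3 * t - 1) (P i) \<noteq> H (3 * t - 1) (P j)"
      using homeo_bd_inj[OF isotopy_homeo_bd[OF H], of "3 * t - 1"] 2 by (auto dest: inj_onD)
    then show ?thesis using 2 ij by (simp add: braid_path_def)
  next
    case 3
    then show ?thesis
      using Omega_segments_distinct[OF Omega(2) ij, of "3 - 3 * t"] t ij
      by (simp add: braid_path_def braid_path_last_third)
  qed
qed

lemma braid_path_in_conf:
  assumes "homeo_bd \<phi>" and "isotopy H \<phi>" and "beta_defined n \<phi> P" and "t \<in> {0..1}"
  shows "braid_path n \<phi> H P t \<in> conf n"
  using braid_path_in_ball[OF assms] braid_path_distinct[OF assms] by (auto simp: conf_def braid_path_def)

lemma continuous_on_cases_le3:
  fixes h :: "'a::topological_space \<Rightarrow> real"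
  assumes "continuous_on {x \<in> S. h x \<le> a} f" and "continuous_on {x \<in> S. a \<le> h x \<and> h x \<le> b} g"
    and "continuous_on {x \<in> S. b \<le> h x} k" and "continuous_on S h"
    and "\<And>x. x \<in> S \<Longrightarrow> h x = a \<Longrightarrow> f x = g x" and "\<And>x. x \<in> S \<Longrightarrow> h x = b \<Longrightarrow> g x = k x"
    and "a \<le> b"
  shows "continuous_on S (\<lambda>x. if h x \<le> a then f x else if h x \<le> b then g x else k x)"
proof (rule continuous_on_cases_le)
  have "{x \<in> {x \<in> S. a \<le> h x}. h x \<le> b} = {x \<in> S. a \<le> h x \<and> h x \<le> b}" by auto
  then have "continuous_on {x \<in> {x \<in> S. a \<le> h x}. h x \<le> b} g"
    using assms(2) by simp
  moreover have "continuous_on {x \<in> {x \<in> S. a \<le> h x}. b \<le> h x} k"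
    by (rule continuous_on_subset[OF assms(3)]) auto
  ultimately show "continuous_on {x \<in> S. a \<le> h x} (\<lambda>x. if h x \<le> b then g x else k x)"
    using assms(4,6) by (intro continuous_on_cases_le) (auto intro: continuous_on_subset)
qed (use assms in auto)

lemma continuous_on_braid_path_family_coordinate:
  fixes K :: "'a::topological_space \<Rightarrow> real \<Rightarrow> complex \<Rightarrow> complex"
    and Q :: "'a \<Rightarrow> nat \<Rightarrow> complex"
  assumes \<phi>: "homeo_bd \<phi>"
    and K: "continuous_on ((S \<times> {0..1}) \<times> cball 0 1) (\<lambda>((s, \<tau>), x). K s \<tau> x)"
    and K_isotopy: "\<And>s. s \<in> S \<Longrightarrow> isotopy (K s) \<phi>"
    and Q: "continuous_on S (\<lambda>s. Q s i)"
    and Q_cball: "\<And>s. s \<in> S \<Longrightarrow> Q s i \<in> cball 0 1"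
    and i: "i < n"
  shows "continuous_on (S \<times> {0..1}) (\<lambda>(s, t). braid_path n \<phi> (K s) (Q s) t i)"
proof -
  let ?R = "S \<times> {0..1::real}"
  have Qi: "continuous_on A (\<lambda>z. Q (fst z) i)" if "A \<subseteq> ?R" for A
    by (rule continuous_on_compose2[OF Q continuous_on_fst]) (use that in auto)
  have "continuous_on {z \<in> ?R. 1/3 \<le> snd z \<and> snd z \<le> 2/3}
      (\<lambda>z. (\<lambda>((s, \<tau>), x). K s \<tau> x) ((fst z, 3 * snd z - 1), Q (fst z) i))"
    by (rule continuous_on_compose2[OF K]) (use Q_cball in \<open>auto intro!: continuous_intros Qi\<close>)
  moreover have "continuous_on {z \<in> ?R. 2/3 \<le> snd z} (\<lambda>z. \<phi> (Q (fst z) i))"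
    by (rule continuous_on_compose2[OF homeo_bd_continuous[OF \<phi>] Qi]) (use Q_cball in auto)
  ultimately have "continuous_on ?R (\<lambda>z.
      if snd z \<le> 1/3 then (1 - 3 * snd z) *\<^sub>R qpt n i + (3 * snd z) *\<^sub>R Q (fst z) i
      else if snd z \<le> 2/3 then K (fst z) (3 * snd z - 1) (Q (fst z) i)
      else (3 - 3 * snd z) *\<^sub>R \<phi> (Q (fst z) i) + (3 * snd z - 2) *\<^sub>R qpt n i)"
  proof (intro continuous_on_cases_le3)
    fix z assume "z \<in> ?R" "snd z = 1/3"
    then obtain s where "z = (s, 1/3)" "s \<in> S" by (cases z) auto
    then show "(1 - 3 * snd z) *\<^sub>R qpt n i + (3 * snd z) *\<^sub>R Q (fst z) i
        = K (fst z) (3 * snd z - 1) (Q (fst z) i)"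
      using isotopy_start[OF K_isotopy] Q_cball by simp
  next
    fix z assume "z \<in> ?R" "snd z = 2/3"
    then obtain s where "z = (s, 2/3)" "s \<in> S" by (cases z) auto
    then show "K (fst z) (3 * snd z - 1) (Q (fst z) i)
        = (3 - 3 * snd z) *\<^sub>R \<phi> (Q (fst z) i) + (3 * snd z - 2) *\<^sub>R qpt n i"
      using isotopy_finish[OF K_isotopy] Q_cball by simp
  qed (auto intro!: continuous_intros Qi)
  then show ?thesis using i by (simp add: braid_path_def case_prod_beta)
qed

lemma continuous_on_braid_path_family:
  fixes K :: "'a::topological_space \<Rightarrow> real \<Rightarrow> complex \<Rightarrow> complex"
    and Q :: "'a \<Rightarrow> nat \<Rightarrow> complex"
  assumes \<phi>: "homeo_bd \<phi>"
    and K: "continuous_on ((S \<times> {0..1}) \<times> cball 0 1) (\<lambda>((s, \<tau>), x). K s \<tau> x)"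
    and K_isotopy: "\<And>s. s \<in> S \<Longrightarrow> isotopy (K s) \<phi>"
    and Q: "\<And>i. i < n \<Longrightarrow> continuous_on S (\<lambda>s. Q s i)"
    and Q_cball: "\<And>s i. s \<in> S \<Longrightarrow> i < n \<Longrightarrow> Q s i \<in> cball 0 1"
  shows "continuous_on (S \<times> {0..1}) (\<lambda>(s, t). braid_path n \<phi> (K s) (Q s) t)"
proof (rule continuous_on_coordinatewise_then_product)
  fix i
  show "continuous_on (S \<times> {0..1}) (\<lambda>z. (case z of (s, t) \<Rightarrow> braid_path n \<phi> (K s) (Q s) t) i)"
  proof (cases "i < n")
    case True
    then show ?thesis
      using continuous_on_braid_path_family_coordinate[OF \<phi> K K_isotopy Q Q_cball]
      by (simp add: case_prod_beta)
  qed (simp add: braid_path_def case_prod_beta)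
qed

lemma homotopic_braid_paths_family:
  fixes K :: "real \<Rightarrow> real \<Rightarrow> complex \<Rightarrow> complex" and Q :: "real \<Rightarrow> nat \<Rightarrow> complex"
  assumes \<phi>: "homeo_bd \<phi>"
    and K: "continuous_on (({0..1} \<times> {0..1}) \<times> cball 0 1) (\<lambda>((s, \<tau>), x). K s \<tau> x)"
    and K_isotopy: "\<And>s. s \<in> {0..1} \<Longrightarrow> isotopy (K s) \<phi>"
    and Q: "\<And>i. i < n \<Longrightarrow> continuous_on {0..1} (\<lambda>s. Q s i)"
    and Q_defined: "\<And>s. s \<in> {0..1} \<Longrightarrow> beta_defined n \<phi> (Q s)"
  shows "homotopic_paths (conf n) (braid_path n \<phi> (K 0) (Q 0)) (braid_path n \<phi> (K 1) (Q 1))"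
  unfolding homotopic_paths
proof (intro exI conjI ballI)
  let ?h = "\<lambda>(s, t). braid_path n \<phi> (K s) (Q s) t"
  show "continuous_on ({0..1} \<times> {0..1}) ?h"
    using Q_defined by (intro continuous_on_braid_path_family[OF \<phi> K K_isotopy Q])
      (auto simp: beta_defined_def Omega_def)
  show "?h \<in> {0..1} \<times> {0..1} \<rightarrow> conf n"
    using braid_path_in_conf[OF \<phi> K_isotopy Q_defined] by auto
qed (auto simp: pathstart_def pathfinish_def braid_path_def)

lemma homotopic_braid_paths_segment:
  assumes \<phi>: "homeo_bd \<phi>" and H: "isotopy H \<phi>"
    and segment: "\<And>s. s \<in> {0..1} \<Longrightarrow> beta_defined n \<phi> (\<lambda>i. (1 - s) *\<^sub>R P i + s *\<^sub>R P' i)"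
  shows "homotopic_paths (conf n) (braid_path n \<phi> H P) (braid_path n \<phi> H P')"
proof -
  have "continuous_on (({0..1} \<times> {0..1}) \<times> cball 0 1) (\<lambda>w. (\<lambda>(t, x). H t x) (snd (fst w), snd w))"
    by (rule continuous_on_compose2[OF isotopy_continuous[OF H]])
      (auto intro!: continuous_intros)
  then have "homotopic_paths (conf n) (braid_path n \<phi> H (\<lambda>i. (1 - 0) *\<^sub>R P i + 0 *\<^sub>R P' i))
      (braid_path n \<phi> H (\<lambda>i. (1 - 1) *\<^sub>R P i + 1 *\<^sub>R P' i))"
    by (intro homotopic_braid_paths_family[OF \<phi>, where K = "\<lambda>s. H"] H segment continuous_intros)
      (auto simp: case_prod_beta)
  then show ?thesis by simp
qed

section \<open>Independence of the isotopy\<close>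

text \<open>The reparametrisation \<open>\<tau> \<mapsto> alexander (alexander_scale \<tau>) (H (isotopy_clock \<tau>))\<close> of an
  isotopy \<open>H\<close> shrinks the identity, runs \<open>H\<close> at scale \<open>0\<close> and expands \<open>H 1\<close>, so it
  only depends on \<open>H 1\<close>.\<close>
definition alexander_scale :: "real \<Rightarrow> real" where
  "alexander_scale \<tau> = max 0 (\<bar>3 * \<tau> - 3/2\<bar> - 1/2)"

definition isotopy_clock :: "real \<Rightarrow> real" where
  "isotopy_clock \<tau> = min 1 (max 0 (3 * \<tau> - 1))"

lemma alexander_scale_range: "\<tau> \<in> {0..1} \<Longrightarrow> alexander_scale \<tau> \<in> {0..1}"
  by (auto simp: alexander_scale_def)

lemma isotopy_clock_range: "isotopy_clock \<tau> \<in> {0..1}"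
  by (auto simp: isotopy_clock_def)

lemma continuous_on_alexander_isotopy:
  assumes H: "isotopy H \<phi>"
  shows "continuous_on (({0..1} \<times> {0..1}) \<times> cball 0 1) (\<lambda>((u, t), x). alexander u (H t) x)"
  using isotopy_continuous[OF H] homeo_bd_maps_cball[OF isotopy_homeo_bd[OF H]]
    homeo_bd_fixes_sphere[OF isotopy_homeo_bd[OF H]]
  by (intro continuous_on_alexander_family) auto

lemma isotopy_homotopy_to_reparametrised:
  assumes H: "isotopy H \<phi>"
  defines "K \<equiv> \<lambda>s \<tau>. alexander ((1 - s) + s * alexander_scale \<tau>) (H ((1 - s) * \<tau> + s * isotopy_clock \<tau>))"
  shows "continuous_on (({0..1} \<times> {0..1}) \<times> cball 0 1) (\<lambda>((s, \<tau>), x). K s \<tau> x)"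
    and "s \<in> {0..1} \<Longrightarrow> isotopy (K s) \<phi>"
proof -
  let ?S = "{0..1::real} \<times> {0..1::real}"
  define p where "p z = ((1 - fst z) * 1 + fst z * alexander_scale (snd z),
    (1 - fst z) * snd z + fst z * isotopy_clock (snd z))" for z :: "real \<times> real"
  have convex: "(1 - s) * a + s * b \<in> {0..1}" if "a \<in> {0..1}" "b \<in> {0..1}" "s \<in> {0..1}" for a b s :: real
    using convexD_alt[OF convex_real_interval(5) that(1,2), of s] that(3) by simp
  have p: "p z \<in> ?S" if "z \<in> ?S" for z
    using that convex[of 1 "alexander_scale (snd z)" "fst z"] alexander_scale_range[of "snd z"]
      convex[of "snd z" "isotopy_clock (snd z)" "fst z"] isotopy_clock_range[of "snd z"]
    by (auto simp: p_def mem_Times_iff)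
  have "continuous_on (?S \<times> cball 0 1) (\<lambda>w. (p (fst w), snd w))"
    unfolding p_def alexander_scale_def isotopy_clock_def by (intro continuous_intros)
  moreover have "(\<lambda>w. (p (fst w), snd w)) ` (?S \<times> cball 0 1) \<subseteq> ?S \<times> cball 0 1"
    using p by force
  ultimately have "continuous_on (?S \<times> cball 0 1) (\<lambda>w. (\<lambda>((u, t), x). alexander u (H t) x) (p (fst w), snd w))"
    by (rule continuous_on_compose2[OF continuous_on_alexander_isotopy[OF H]])
  then show K: "continuous_on (?S \<times> cball 0 1) (\<lambda>((s, \<tau>), x). K s \<tau> x)"
    by (simp add: K_def p_def case_prod_beta)
  show "isotopy (K s) \<phi>" if s: "s \<in> {0..1}"
    unfolding isotopy_def
  proof (intro conjI ballI)
    have "continuous_on ({0..1} \<times> cball 0 1) (\<lambda>w. (\<lambda>((s, \<tau>), x). K s \<tau> x) ((s, fst w), snd w))"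
      by (rule continuous_on_compose2[OF K]) (use s in \<open>auto intro!: continuous_intros\<close>)
    then show "continuous_on ({0..1} \<times> cball 0 1) (\<lambda>(\<tau>, x). K s \<tau> x)"
      by (simp add: case_prod_beta)
    show "homeo_bd (K s \<tau>)" if "\<tau> \<in> {0..1}" for \<tau>
      using homeo_bd_alexander[OF isotopy_homeo_bd[OF H]] p[of "(s, \<tau>)"] s that
      by (simp add: K_def p_def)
    show "K s 0 x = x" "K s 1 x = \<phi> x" if "x \<in> cball 0 1" for x
      using that alexander_1[OF that] isotopy_start[OF H that] isotopy_finish[OF H that]
      by (simp_all add: K_def alexander_scale_def isotopy_clock_def)
  qed
qed

lemma homotopic_braid_path_reparametrised:
  assumes \<phi>: "homeo_bd \<phi>" and H: "isotopy H \<phi>" and P: "beta_defined n \<phi> P"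
  shows "homotopic_paths (conf n) (braid_path n \<phi> H P)
    (braid_path n \<phi> (\<lambda>\<tau>. alexander (alexander_scale \<tau>) (H (isotopy_clock \<tau>))) P)"
proof -
  have "homotopic_paths (conf n)
      (braid_path n \<phi> (\<lambda>\<tau>. alexander 1 (H \<tau>)) P)
      (braid_path n \<phi> (\<lambda>\<tau>. alexander (alexander_scale \<tau>) (H (isotopy_clock \<tau>))) P)"
    using homotopic_braid_paths_family[OF \<phi> isotopy_homotopy_to_reparametrised[OF H], where Q = "\<lambda>s. P"] P
    by simp
  moreover have "braid_path n \<phi> (\<lambda>\<tau>. alexander 1 (H \<tau>)) P = braid_path n \<phi> H P"
    using P by (intro braid_path_cong) (auto simp: alexander_1 beta_defined_def Omega_def)
  ultimately show ?thesis by simp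
qed

lemma braid_path_reparametrised_eq:
  assumes H: "isotopy H \<phi>" and H': "isotopy H' \<phi>" and P: "\<And>i. i < n \<Longrightarrow> P i \<in> cball 0 1"
  shows "braid_path n \<phi> (\<lambda>\<tau>. alexander (alexander_scale \<tau>) (H (isotopy_clock \<tau>))) P
       = braid_path n \<phi> (\<lambda>\<tau>. alexander (alexander_scale \<tau>) (H' (isotopy_clock \<tau>))) P"
proof (rule braid_path_cong[OF _ P])
  fix \<tau> :: real and x :: complex assume x: "x \<in> cball 0 1"
  have scale: "0 \<le> alexander_scale \<tau>" by (simp add: alexander_scale_def)
  consider "\<tau> \<le> 1/3" | "1/3 \<le> \<tau>" "\<tau> \<le> 2/3" | "2/3 \<le> \<tau>" by linarith
  then show "alexander (alexander_scale \<tau>) (H (isotopy_clock \<tau>)) x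
      = alexander (alexander_scale \<tau>) (H' (isotopy_clock \<tau>)) x"
  proof cases
    case 1
    then have "isotopy_clock \<tau> = 0" by (simp add: isotopy_clock_def)
    then show ?thesis
      using alexander_id_on_cball[of x "H 0", OF x isotopy_start[OF H] scale]
        alexander_id_on_cball[of x "H' 0", OF x isotopy_start[OF H'] scale]
      by simp
  next
    case 2
    then have "alexander_scale \<tau> = 0" by (simp add: alexander_scale_def)
    then show ?thesis by simp
  next
    case 3
    then have "isotopy_clock \<tau> = 1" by (simp add: isotopy_clock_def)
    then show ?thesis
      using alexander_cong[of x "H 1" "H' 1", OF x _ scale] isotopy_finish[OF H] isotopy_finish[OF H']
      by simp
  qed
qed

lemma homotopic_braid_paths_isotopies:
  assumes \<phi>: "homeo_bd \<phi>" and H: "isotopy H \<phi>" and H': "isotopy H' \<phi>" and P: "beta_defined n \<phi> P"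
  shows "homotopic_paths (conf n) (braid_path n \<phi> H P) (braid_path n \<phi> H' P)"
proof -
  have "\<And>i. i < n \<Longrightarrow> P i \<in> cball 0 1" using P by (auto simp: beta_defined_def Omega_def)
  then show ?thesis
    using homotopic_braid_path_reparametrised[OF \<phi> H P]
      homotopic_braid_path_reparametrised[OF \<phi> H' P, THEN homotopic_paths_sym]
      braid_path_reparametrised_eq[OF H H']
    by (auto intro: homotopic_paths_trans)
qed

lemma homotopic_paths_class_eq:
  "homotopic_paths S g g' \<Longrightarrow> {h. homotopic_paths S g h} = {h. homotopic_paths S g' h}"
  by (auto intro: homotopic_paths_trans homotopic_paths_sym)

lemma beta_eq_alexander_class:
  assumes \<phi>: "homeo_bd \<phi>" and P: "beta_defined n \<phi> P"
  shows "beta n \<phi> P = braid_class n (braid_path n \<phi> (\<lambda>u. alexander u \<phi>) P)"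
  unfolding beta_def
proof (rule someI2)
  show "\<exists>H. isotopy H \<phi> \<and> braid_class n (braid_path n \<phi> (\<lambda>u. alexander u \<phi>) P)
      = braid_class n (braid_path n \<phi> H P)"
    using isotopy_alexander[OF \<phi>] by blast
next
  fix b assume "\<exists>H. isotopy H \<phi> \<and> b = braid_class n (braid_path n \<phi> H P)"
  then obtain H where H: "isotopy H \<phi>" and b: "b = braid_class n (braid_path n \<phi> H P)" by blast
  show "b = braid_class n (braid_path n \<phi> (\<lambda>u. alexander u \<phi>) P)"
    unfolding b braid_class_def
    by (rule homotopic_paths_class_eq[OF homotopic_braid_paths_isotopies[OF \<phi> H isotopy_alexander[OF \<phi>] P]])
qed

lemma beta_in_pure_braids:
  assumes \<phi>: "homeo_bd \<phi>" and P: "beta_defined n \<phi> P"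
  shows "beta n \<phi> P \<in> pure_braids n"
proof -
  have "homotopic_paths (conf n) (braid_path n \<phi> (\<lambda>u. alexander u \<phi>) P) (braid_path n \<phi> (\<lambda>u. alexander u \<phi>) P)"
    using P by (intro homotopic_braid_paths_segment[OF \<phi> isotopy_alexander[OF \<phi>]]) (simp add: scaleR_add_left[symmetric])
  then show ?thesis
    unfolding beta_eq_alexander_class[OF \<phi> P] pure_braids_def
    using homotopic_paths_imp_path homotopic_paths_imp_subset by fastforce
qed

section \<open>Local constancy of \<open>\<beta>\<close>\<close>

definition coord_nhds :: "nat \<Rightarrow> (nat \<Rightarrow> 'a::metric_space) \<Rightarrow> (nat \<Rightarrow> 'a) filter" where
  "coord_nhds n P = (INF e\<in>{0<..}. principal {P'. \<forall>i<n. dist (P' i) (P i) < e})"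

lemma eventually_coord_nhds:
  "eventually A (coord_nhds n P) \<longleftrightarrow> (\<exists>e>0. \<forall>P'. (\<forall>i<n. dist (P' i) (P i) < e) \<longrightarrow> A P')"
  unfolding coord_nhds_def
proof (subst eventually_INF_base)
  fix a b :: real assume "a \<in> {0<..}" "b \<in> {0<..}"
  then show "\<exists>x\<in>{0<..}. principal {P'. \<forall>i<n. dist (P' i) (P i) < x}
      \<le> inf (principal {P'. \<forall>i<n. dist (P' i) (P i) < a}) (principal {P'. \<forall>i<n. dist (P' i) (P i) < b})"
    by (intro bexI[of _ "min a b"]) auto
qed (auto simp: eventually_principal)

lemma tendsto_coord_nhds: "i < n \<Longrightarrow> ((\<lambda>P'. P' i) \<longlongrightarrow> P i) (coord_nhds n P)"
  unfolding tendsto_iff eventually_coord_nhds by blast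

lemma open_segments_disjoint:
  fixes p q :: "'a::euclidean_space"
  shows "open {(a, b). \<forall>s\<in>{0..1::real}. (1 - s) *\<^sub>R p + s *\<^sub>R a \<noteq> (1 - s) *\<^sub>R q + s *\<^sub>R b}"
proof -
  let ?T = "{w :: real \<times> 'a \<times> 'a. (1 - fst w) *\<^sub>R p + fst w *\<^sub>R fst (snd w)
      = (1 - fst w) *\<^sub>R q + fst w *\<^sub>R snd (snd w)}"
  have "closed ?T" by (intro closed_Collect_eq continuous_intros)
  then have "closed {y. \<exists>s. s \<in> {0..1} \<and> (s, y) \<in> ?T}"
    by (intro closed_compact_projection compact_Icc)
  moreover have "{(a, b). \<forall>s\<in>{0..1::real}. (1 - s) *\<^sub>R p + s *\<^sub>R a \<noteq> (1 - s) *\<^sub>R q + s *\<^sub>R b}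
      = - {y. \<exists>s. s \<in> {0..1} \<and> (s, y) \<in> ?T}"
    by auto
  ultimately show ?thesis by auto
qed

lemma isCont_homeo_bd: "homeo_bd g \<Longrightarrow> x \<in> ball 0 1 \<Longrightarrow> isCont g x"
  using continuous_on_interior[OF homeo_bd_continuous] by simp

lemma eventually_beta_defined:
  assumes \<phi>: "homeo_bd \<phi>" and P: "beta_defined n \<phi> P"
  shows "eventually (beta_defined n \<phi>) (coord_nhds n P)"
proof -
  define Seg where "Seg i j = {(a, b). \<forall>s\<in>{0..1::real}. (1 - s) *\<^sub>R qpt n i + s *\<^sub>R a \<noteq> (1 - s) *\<^sub>R qpt n j + s *\<^sub>R b}" for i j
  have beta_defined_iff: "beta_defined n \<phi> Q \<longleftrightarrow> (\<forall>i\<in>{..<n}. Q i \<in> ball 0 1) \<and>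
      (\<forall>(i, j)\<in>{..<n} \<times> {..<n}. i \<noteq> j \<longrightarrow> (Q i, Q j) \<in> {(a, b). a \<noteq> b} \<inter> Seg i j
        \<and> (\<phi> (Q i), \<phi> (Q j)) \<in> Seg i j)" for Q
  proof -
    have "Q i \<in> cball 0 1" "\<phi> (Q i) \<in> cball 0 1" if "Q i \<in> ball 0 1" for i
      using that homeo_bd_maps_cball[OF \<phi>] by auto
    then show ?thesis by (auto simp: beta_defined_def Omega_def Seg_def) (meson lessThan_iff less_imp_le)
  qed
  have "\<forall>\<^sub>F P' in coord_nhds n P. P' i \<in> ball 0 1" if "i \<in> {..<n}" for i
    using P that by (intro topological_tendstoD[OF tendsto_coord_nhds]) (auto simp: beta_defined_def)
  moreover have "\<forall>\<^sub>F P' in coord_nhds n P. i \<noteq> j \<longrightarrow> (P' i, P' j) \<in> {(a, b). a \<noteq> b} \<inter> Seg i j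
      \<and> (\<phi> (P' i), \<phi> (P' j)) \<in> Seg i j" if ij: "(i, j) \<in> {..<n} \<times> {..<n}" for i j
  proof (cases "i = j")
    case False
    have Seg: "open (Seg i j)" unfolding Seg_def by (rule open_segments_disjoint)
    have "open {(a, b). a \<noteq> (b::complex)}"
      unfolding split_def by (intro open_Collect_neq continuous_intros)
    with Seg have U: "open ({(a, b). a \<noteq> b} \<inter> Seg i j)" by blast
    have lim: "((\<lambda>P'. (P' i, P' j)) \<longlongrightarrow> (P i, P j)) (coord_nhds n P)"
      using ij by (intro tendsto_Pair tendsto_coord_nhds) auto
    have lim_\<phi>: "((\<lambda>P'. (\<phi> (P' i), \<phi> (P' j))) \<longlongrightarrow> (\<phi> (P i), \<phi> (P j))) (coord_nhds n P)"
      using ij P beta_defined_in_ball[OF P]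
      by (intro tendsto_Pair isCont_tendsto_compose[OF isCont_homeo_bd[OF \<phi>]] tendsto_coord_nhds) auto
    have "(P i, P j) \<in> {(a, b). a \<noteq> b} \<inter> Seg i j" "(\<phi> (P i), \<phi> (P j)) \<in> Seg i j"
      using beta_defined_iff[of P] P ij False by auto
    then show ?thesis
      using eventually_conj[OF topological_tendstoD[OF lim U] topological_tendstoD[OF lim_\<phi> Seg]]
      by (auto elim: eventually_mono)
  qed simp
  ultimately show ?thesis
    unfolding beta_defined_iff by (intro eventually_conj eventually_ball_finite) auto
qed

lemma eventually_homotopic_braid_path:
  assumes \<phi>: "homeo_bd \<phi>" and H: "isotopy H \<phi>" and P: "beta_defined n \<phi> P"
  shows "\<forall>\<^sub>F P' in coord_nhds n P. beta_defined n \<phi> P' \<and>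
    homotopic_paths (conf n) (braid_path n \<phi> H P) (braid_path n \<phi> H P')"
proof -
  obtain e where "e > 0" and e: "\<And>P'. \<forall>i<n. dist (P' i) (P i) < e \<Longrightarrow> beta_defined n \<phi> P'"
    using eventually_beta_defined[OF \<phi> P] unfolding eventually_coord_nhds by blast
  have "homotopic_paths (conf n) (braid_path n \<phi> H P) (braid_path n \<phi> H P')"
    if near: "\<forall>i<n. dist (P' i) (P i) < e" for P'
  proof (rule homotopic_braid_paths_segment[OF \<phi> H e], intro allI impI)
    fix s :: real and i assume s: "s \<in> {0..1}" and i: "i < n"
    have "dist ((1 - s) *\<^sub>R P i + s *\<^sub>R P' i) (P i) = s * dist (P' i) (P i)"
      using s by (simp add: dist_norm algebra_simps flip: scaleR_diff_right)
    also have "\<dots> \<le> dist (P' i) (P i)" using s by (intro mult_left_le_one_le) auto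
    also have "\<dots> < e" using near i by blast
    finally show "dist ((1 - s) *\<^sub>R P i + s *\<^sub>R P' i) (P i) < e" .
  qed
  then show ?thesis unfolding eventually_coord_nhds using \<open>e > 0\<close> e by blast
qed

lemma eventually_beta_eq:
  assumes \<phi>: "homeo_bd \<phi>" and P: "beta_defined n \<phi> P"
  shows "\<forall>\<^sub>F P' in coord_nhds n P. beta_defined n \<phi> P' \<and> beta n \<phi> P' = beta n \<phi> P"
  using eventually_homotopic_braid_path[OF \<phi> isotopy_alexander[OF \<phi>] P]
proof (rule eventually_mono, elim conjE)
  fix P' assume P': "beta_defined n \<phi> P'" and homotopic:
    "homotopic_paths (conf n) (braid_path n \<phi> (\<lambda>u. alexander u \<phi>) P) (braid_path n \<phi> (\<lambda>u. alexander u \<phi>) P')"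
  show "beta_defined n \<phi> P' \<and> beta n \<phi> P' = beta n \<phi> P"
    using P' homotopic_paths_class_eq[OF homotopic]
    by (simp add: beta_eq_alexander_class[OF \<phi> P] beta_eq_alexander_class[OF \<phi> P'] braid_class_def)
qed

section \<open>Measurability\<close>

lemma space_PiM_restrict_borel:
  assumes "\<forall>i<n. sets (\<mu> i) = sets (restrict_space borel X)"
  shows "space (PiM {..<n} \<mu>) = PiE {..<n} (\<lambda>i. X)"
proof -
  have "space (\<mu> i) = X" if "i < n" for i
    using sets_eq_imp_space_eq[of "\<mu> i" "restrict_space borel X"] assms that
    by (simp add: space_restrict_space)
  then show ?thesis unfolding space_PiM by (intro PiE_cong) auto
qed

lemma sets_PiM_coord_ball:
  fixes n :: nat
  assumes sets: "\<forall>i<n. sets (\<mu> i) = sets (restrict_space borel X)"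
  shows "{P \<in> space (PiM {..<n} \<mu>). \<forall>i<n. dist (c i) (P i) < r} \<in> sets (PiM {..<n} \<mu>)"
proof -
  have "{P \<in> space (PiM {..<n} \<mu>). \<forall>i<n. dist (c i) (P i) < r} = PiE {..<n} (\<lambda>i. X \<inter> ball (c i) r)"
    unfolding space_PiM_restrict_borel[OF sets] set_eq_iff PiE_iff mem_Collect_eq Int_iff lessThan_iff mem_ball
    by blast
  also have "\<dots> \<in> sets (PiM {..<n} \<mu>)"
  proof (rule sets_PiM_I_finite)
    fix i assume "i \<in> {..<n}"
    moreover have "X \<inter> ball (c i) r \<in> sets (restrict_space borel X)"
      unfolding sets_restrict_space by (rule imageI) simp
    ultimately show "X \<inter> ball (c i) r \<in> sets (\<mu> i)" using sets by simp
  qed simp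
  finally show ?thesis .
qed

lemma eventually_coord_nhds_imp_dense_ball:
  fixes P :: "nat \<Rightarrow> 'a::metric_space"
  assumes dense: "\<And>U. open U \<Longrightarrow> U \<noteq> {} \<Longrightarrow> \<exists>d\<in>D. d \<in> U"
    and A: "eventually A (coord_nhds n P)"
  shows "\<exists>c\<in>PiE {..<n} (\<lambda>_. D). \<exists>k::nat. (\<forall>i<n. dist (c i) (P i) < 1 / Suc k)
    \<and> (\<forall>P'. (\<forall>i<n. dist (c i) (P' i) < 1 / Suc k) \<longrightarrow> A P')"
proof -
  obtain e where "e > 0" and e: "\<And>P'. \<forall>i<n. dist (P' i) (P i) < e \<Longrightarrow> A P'"
    using A unfolding eventually_coord_nhds by blast
  obtain k :: nat where k: "1 / Suc k < e / 2"
    using nat_approx_posE[of "e / 2"] \<open>e > 0\<close> by auto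
  have "\<forall>i. \<exists>d. d \<in> D \<and> dist (P i) d < 1 / Suc k"
  proof
    fix i
    have "ball (P i) (1 / Suc k) \<noteq> {}" by simp
    then show "\<exists>d. d \<in> D \<and> dist (P i) d < 1 / Suc k" using dense[OF open_ball] by force
  qed
  then obtain c where c: "\<And>i. c i \<in> D \<and> dist (P i) (c i) < 1 / Suc k"
    using choice[of "\<lambda>i d. d \<in> D \<and> dist (P i) d < 1 / Suc k"] by blast
  show ?thesis
  proof (intro bexI exI conjI allI impI)
    show "restrict c {..<n} \<in> PiE {..<n} (\<lambda>_. D)" using c by auto
    show "dist (restrict c {..<n} i) (P i) < 1 / Suc k" if "i < n" for i
      using c that by (simp add: dist_commute)
    fix P' assume P': "\<forall>i<n. dist (restrict c {..<n} i) (P' i) < 1 / Suc k"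
    have "dist (P' i) (P i) < e" if "i < n" for i
      using dist_triangle_less_add[of "P' i" "c i" "1 / Suc k" "P i" "1 / Suc k"] P' c[of i] k that
      by (auto simp: dist_commute)
    then show "A P'" by (rule e[rule_format])
  qed
qed

text \<open>A set that is open in the first \<open>n\<close> coordinates is the countable union of the boxes it
  contains whose centres lie in a countable dense set and whose radii are of the form \<open>1 / (k + 1)\<close>.\<close>
lemma sets_PiM_if_coord_open:
  fixes \<mu> :: "nat \<Rightarrow> 'a::{metric_space, second_countable_topology} measure"
  assumes sets: "\<forall>i<n. sets (\<mu> i) = sets (restrict_space borel X)"
    and S: "S \<subseteq> space (PiM {..<n} \<mu>)"
    and S_open: "\<And>P. P \<in> S \<Longrightarrow> \<forall>\<^sub>F P' in coord_nhds n P. P' \<in> space (PiM {..<n} \<mu>) \<longrightarrow> P' \<in> S"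
  shows "S \<in> sets (PiM {..<n} \<mu>)"
proof -
  let ?M = "PiM {..<n} \<mu>"
  obtain D :: "'a set" where "countable D" and dense: "\<And>U. open U \<Longrightarrow> U \<noteq> {} \<Longrightarrow> \<exists>d\<in>D. d \<in> U"
    by (erule countable_dense_setE)
  define box where "box = (\<lambda>(c, k). {P \<in> space ?M. \<forall>i<n. dist (c i) (P i) < 1 / Suc k})"
  define I where "I = {ck \<in> PiE {..<n} (\<lambda>_. D) \<times> UNIV. box ck \<subseteq> S}"
  have "countable I"
    using countable_PiE[of "{..<n}" "\<lambda>_. D", OF _ \<open>countable D\<close>] unfolding I_def
    by (auto intro: countable_subset[rotated])
  moreover have "box (c, k) \<in> sets ?M" for c k
    unfolding box_def using sets_PiM_coord_ball[OF sets] by (simp only: case_prod_conv)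
  moreover have "S = (\<Union>ck\<in>I. box ck)"
  proof
    show "(\<Union>ck\<in>I. box ck) \<subseteq> S" unfolding I_def by auto
    show "S \<subseteq> (\<Union>ck\<in>I. box ck)"
    proof
      fix P assume "P \<in> S"
      obtain c k where "c \<in> PiE {..<n} (\<lambda>_. D)" "\<forall>i<n. dist (c i) (P i) < 1 / Suc k"
        and "\<forall>P'. (\<forall>i<n. dist (c i) (P' i) < 1 / Suc k) \<longrightarrow> P' \<in> space ?M \<longrightarrow> P' \<in> S"
        using eventually_coord_nhds_imp_dense_ball[OF dense S_open[OF \<open>P \<in> S\<close>]] by blast
      then have "(c, k) \<in> I" "P \<in> box (c, k)" using S \<open>P \<in> S\<close> by (auto simp: I_def box_def)
      then show "P \<in> (\<Union>ck\<in>I. box ck)" by blast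
    qed
  qed
  ultimately show ?thesis by (auto intro!: sets.countable_UN')
qed

lemma measurable_coord_locally_constant:
  fixes \<mu> :: "nat \<Rightarrow> 'a::{metric_space, second_countable_topology} measure"
  assumes sets: "\<forall>i<n. sets (\<mu> i) = sets (restrict_space borel X)"
    and D: "D \<subseteq> space (PiM {..<n} \<mu>)"
    and locally_constant: "\<And>P. P \<in> D \<Longrightarrow>
      \<forall>\<^sub>F P' in coord_nhds n P. P' \<in> space (PiM {..<n} \<mu>) \<longrightarrow> P' \<in> D \<and> f P' = f P"
    and f: "f ` D \<subseteq> B"
  shows "f \<in> measurable (restrict_space (PiM {..<n} \<mu>) D) (count_space B)"
  unfolding measurable_def
proof (intro CollectI conjI ballI)
  show "f \<in> space (restrict_space (PiM {..<n} \<mu>) D) \<rightarrow> space (count_space B)"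
    using D f by (auto simp: space_restrict_space)
  fix A
  have "f -` A \<inter> D \<in> sets (PiM {..<n} \<mu>)"
  proof (rule sets_PiM_if_coord_open[OF sets])
    fix P assume P: "P \<in> f -` A \<inter> D"
    show "\<forall>\<^sub>F P' in coord_nhds n P. P' \<in> space (PiM {..<n} \<mu>) \<longrightarrow> P' \<in> f -` A \<inter> D"
      by (rule eventually_mono[OF locally_constant]) (use P in auto)
  qed (use D in auto)
  then show "f -` A \<inter> space (restrict_space (PiM {..<n} \<mu>) D) \<in> sets (restrict_space (PiM {..<n} \<mu>) D)"
    using D by (auto simp: space_restrict_space sets_restrict_space Int_absorb2 intro!: image_eqI[of _ _ "f -` A \<inter> D"])
qed

theorem lemma2:
  fixes n :: nat and \<phi> :: "complex \<Rightarrow> complex" and \<mu> :: "nat \<Rightarrow> complex measure"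
  assumes "n \<ge> 1"
    and "homeo_bd \<phi>"
    and "\<forall>i<n. prob_space (\<mu> i)"
    and "\<forall>i<n. sets (\<mu> i) = sets (restrict_space borel (cball 0 1))"
    and "\<forall>i<n. preserves \<phi> (\<mu> i)"
    and "coherent n \<mu>"
  shows "{P \<in> space (PiM {..<n} \<mu>). beta_defined n \<phi> P} \<in> sets (PiM {..<n} \<mu>)
    \<and> beta n \<phi> \<in> measurable
         (restrict_space (PiM {..<n} \<mu>) {P \<in> space (PiM {..<n} \<mu>). beta_defined n \<phi> P})
         (count_space (pure_braids n))"
proof -
  note \<phi> = assms(2) and sets = assms(4)
  let ?M = "PiM {..<n} \<mu>"
  let ?D = "{P \<in> space ?M. beta_defined n \<phi> P}"
  have locally_constant: "\<forall>\<^sub>F P' in coord_nhds n P. P' \<in> space ?M \<longrightarrow> P' \<in> ?D \<and> beta n \<phi> P' = beta n \<phi> P"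
    if "P \<in> ?D" for P
    using that by (intro eventually_mono[OF eventually_beta_eq[OF \<phi>]]) auto
  have "?D \<in> sets ?M"
  proof (rule sets_PiM_if_coord_open[OF sets])
    fix P assume "P \<in> ?D"
    show "\<forall>\<^sub>F P' in coord_nhds n P. P' \<in> space ?M \<longrightarrow> P' \<in> ?D"
      by (rule eventually_mono[OF locally_constant[OF \<open>P \<in> ?D\<close>]]) auto
  qed auto
  moreover have "beta n \<phi> \<in> measurable (restrict_space ?M ?D) (count_space (pure_braids n))"
    using locally_constant beta_in_pure_braids[OF \<phi>]
    by (intro measurable_coord_locally_constant[OF sets]) auto
  ultimately show ?thesis by blast
qed

end
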